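(* Let $0<q<1$. Define the $q$-Bernoulli numbers $b_{n,q}$ and $q$-Bernoulli polynomials $B_{n,q}(x)$ by \[ \frac{t}{e_q(t)-1}=\sum_{n=0}^\infty b_{n,q}\frac{t^n}{[n]_q!},\qquad \frac{t}{e_q(t)-1}e_q(tx)=\sum_{n=0}^\infty B_{n,q}(x)\frac{t^n}{[n]_q!} \] (for $t$ in a neighborhood of $0$). Then for every integer $n\ge1$, \[ B_{n,q}(qx)=q^n\left(x-\frac{1}{q[2]_q}\right)B_{n-1,q}(x)-\frac{1}{[n]_q}\sum_{k=0}^{n-2}\begin{bmatrix}n\\k\end{bmatrix}_q q^{k-1}b_{n-k,q}B_{k,q}(x). \]
   Context: $[n]_q=\frac{1-q^n}{1-q}$, $[0]_q!=1$, $[n]_q!=[n]_q\cdots[1]_q$, $\begin{bmatrix}n\\k\end{bmatrix}_q=\frac{[n]_q!}{[k]_q![n-k]_q!}$, and $e_q(t)=\sum_{n\ge0}\frac{t^n}{[n]_q!}$. *)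

theory Defs
  imports Complex_Main
begin

definition qint :: "real \<Rightarrow> nat \<Rightarrow> real" where
  "qint q n = (1 - q ^ n) / (1 - q)"

definition qfact :: "real \<Rightarrow> nat \<Rightarrow> real" where
  "qfact q n = (\<Prod>i\<in>{1..n}. qint q i)"

definition qbinom :: "real \<Rightarrow> nat \<Rightarrow> nat \<Rightarrow> real" where
  "qbinom q n k = qfact q n / (qfact q k * qfact q (n - k))"

definition eq :: "real \<Rightarrow> real \<Rightarrow> real" where
  "eq q t = (\<Sum>n. t ^ n / qfact q n)"

definition qbern_num :: "real \<Rightarrow> nat \<Rightarrow> real" where
  "qbern_num q = (THE b. \<exists>\<epsilon>>0. \<forall>t. t \<noteq> 0 \<and> \<bar>t\<bar> < \<epsilon> \<longrightarrow>
      (\<lambda>n. b n * t ^ n / qfact q n) sums (t / (eq q t - 1)))"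

definition qbern_poly :: "real \<Rightarrow> nat \<Rightarrow> real \<Rightarrow> real" where
  "qbern_poly q = (THE B. \<forall>x. \<exists>\<epsilon>>0. \<forall>t. t \<noteq> 0 \<and> \<bar>t\<bar> < \<epsilon> \<longrightarrow>
      (\<lambda>n. B n x * t ^ n / qfact q n) sums (t / (eq q t - 1) * eq q (t * x)))"

end

theory Submission
  imports Defs "HOL-Analysis.FPS_Convergence"
begin

text \<open>
  Work with formal power series: let \<open>E\<close> be the series of \<open>e\<^sub>q(t)\<close>, \<open>H = t / (E - 1)\<close> and
  \<open>P\<^sub>x = H \<cdot> E(x t)\<close>, the generating series of \<open>b\<^sub>n\<^sub>,\<^sub>q / [n]\<^sub>q!\<close> and \<open>B\<^sub>n\<^sub>,\<^sub>q(x) / [n]\<^sub>q!\<close>.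
  The q-difference equation \<open>E(t) - E(q t) = (1 - q) t E(t)\<close> gives
  \<open>E(q x t) = (1 - (1 - q) x t) E(x t)\<close>, hence \<open>B\<^sub>n(q x) = B\<^sub>n(x) - (1 - q\<^sup>n) x B\<^sub>n\<^sub>-\<^sub>1(x)\<close>,
  and it also gives the functional equation
  \<open>(1 - q) H(t) H(q t) = H(q t) - q H(t) - (1 - q) t H(q t)\<close>. Multiplying the latter by
  \<open>E(q x t)\<close> and comparing coefficients of \<open>t\<^sup>n\<close> expresses \<open>B\<^sub>n(x)\<close> through
  \<open>B\<^sub>n\<^sub>-\<^sub>1(x)\<close> and the convolution \<open>\<Sum> [n,k] q\<^sup>k b\<^sub>n\<^sub>-\<^sub>k B\<^sub>k(x)\<close>; the two identities combine
  to the claim. The analytic definitions are matched with the formal series because all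
  series involved converge near \<open>0\<close> and power series coefficients are unique.
\<close>

section \<open>Dilation and convergence of power series\<close>

abbreviation fps_dilate :: "'a::comm_ring_1 \<Rightarrow> 'a fps \<Rightarrow> 'a fps" where
  "fps_dilate c F \<equiv> F oo (fps_const c * fps_X)"

lemma fps_dilate_fps_X: "fps_dilate c fps_X = fps_const c * (fps_X :: 'a::comm_ring_1 fps)"
  by (rule fps_ext) (simp add: fps_X_mult_nth)

lemma fps_dilate_dilate: "fps_dilate c (fps_dilate d F) = fps_dilate (d * c) F"
  by (rule fps_ext) (simp add: power_mult_distrib)

lemma fps_dilate_mult: "fps_dilate c (F * G) = fps_dilate c F * fps_dilate c (G :: 'a::idom fps)"
  by (simp add: fps_compose_mult_distrib)

lemma eval_fps_dilate: "eval_fps (fps_dilate c F) z = eval_fps F (c * z)"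
  unfolding eval_fps_def fps_nth_compose_linear by (simp add: power_mult_distrib mult_ac)

lemma fps_conv_radius_ge_1_if_bounded:
  fixes F :: "'a::{banach, real_normed_div_algebra} fps"
  assumes "\<And>n. norm (fps_nth F n) \<le> C"
  shows "1 \<le> fps_conv_radius F"
  unfolding fps_conv_radius_def
proof (rule conv_radius_geI_ex')
  fix r :: real
  assume r: "0 < r" "ereal r < 1"
  show "summable (\<lambda>n. fps_nth F n * of_real r ^ n)"
  proof (rule summable_comparison_test')
    show "summable (\<lambda>n. C * r ^ n)"
      using r by (intro summable_mult summable_geometric) auto
    show "norm (fps_nth F n * of_real r ^ n) \<le> C * r ^ n" for n
      using r assms[of n] by (simp add: norm_mult norm_power mult_right_mono)
  qed
qed

lemma fps_conv_radius_dilate_pos: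
  fixes F :: "'a::{banach, real_normed_field} fps"
  assumes "0 < fps_conv_radius F"
  shows "0 < fps_conv_radius (fps_dilate c F)"
proof -
  obtain r where r: "0 < r" "ereal r < fps_conv_radius F"
    using ereal_dense2[OF assms] by (metis ereal_less(2) not_less_iff_gr_or_eq order_less_trans)
  define s where "s = r / (norm c + 1)"
  have "0 < norm c + 1"
    using norm_ge_zero[of c] by linarith
  then have "s > 0"
    using r by (simp add: s_def)
  have "norm (c * of_real s) = norm c * s"
    using \<open>s > 0\<close> by (simp add: norm_mult)
  also have "\<dots> < (norm c + 1) * s"
    using \<open>s > 0\<close> by (intro mult_strict_right_mono) auto
  also have "\<dots> = r"
    using \<open>0 < norm c + 1\<close> by (simp add: s_def)
  finally have "ereal (norm (c * of_real s)) < fps_conv_radius F"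
    using r(2) by (metis less_ereal.simps(1) order.strict_trans)
  then have "summable (\<lambda>n. fps_nth F n * (c * of_real s) ^ n)"
    by (intro summable_in_conv_radius) (simp add: fps_conv_radius_def)
  then have "summable (\<lambda>n. fps_nth (fps_dilate c F) n * of_real s ^ n)"
    unfolding fps_nth_compose_linear by (simp add: power_mult_distrib mult_ac)
  then have "ereal s \<le> fps_conv_radius (fps_dilate c F)"
    unfolding fps_conv_radius_def using conv_radius_geI \<open>s > 0\<close> by force
  then show ?thesis
    using \<open>s > 0\<close> by (metis ereal_less(2) order_less_le_trans)
qed

lemma eventually_norm_less_fps_conv_radius:
  fixes F :: "'a::{banach, real_normed_div_algebra} fps"
  assumes "0 < fps_conv_radius F"
  shows "eventually (\<lambda>t. ereal (norm t) < fps_conv_radius F) (at 0)"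
proof -
  obtain r where "0 < r" "ereal r < fps_conv_radius F"
    using ereal_dense2[OF assms] by (metis ereal_less(2) not_less_iff_gr_or_eq order_less_trans)
  then show ?thesis
    unfolding eventually_at by (intro exI[of _ r]) (auto intro: order.strict_trans[of _ "ereal r"])
qed

lemma powser_coeff_eq_0_if_sums_0:
  fixes a :: "nat \<Rightarrow> 'a::{real_normed_field, banach}"
  assumes "0 < d" and sums_0: "\<And>t. t \<noteq> 0 \<Longrightarrow> norm t < d \<Longrightarrow> (\<lambda>n. a n * t ^ n) sums 0"
  shows "a n = 0"
proof (induction n rule: less_induct)
  case (less n)
  have "(\<lambda>i. a (i + n) * t ^ i) sums 0" if t: "t \<noteq> 0" "norm t < d" for t
  proof -
    have "(\<lambda>i. a (i + n) * t ^ (i + n)) sums 0"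
      using sums_0[OF t] less by (subst sums_iff_shift) simp
    from sums_divide[OF this, of "t ^ n"] show ?thesis
      using t by (simp add: power_add)
  qed
  then have "((\<lambda>_. 0) \<longlongrightarrow> a (0 + n)) (at (0 :: 'a))"
    using powser_limit_0_strong[OF \<open>0 < d\<close>, of "\<lambda>i. a (i + n)" "\<lambda>_. 0"] by auto
  then show ?case
    using LIM_const_eq by fastforce
qed

lemma punctured_expansion_iff:
  fixes F :: "real fps" and c :: "nat \<Rightarrow> real"
  assumes c: "\<And>n. c n \<noteq> 0" and radius: "0 < fps_conv_radius F"
    and eval: "eventually (\<lambda>t. eval_fps F t = f t) (at 0)"
  shows "(\<exists>\<epsilon>>0. \<forall>t. t \<noteq> 0 \<and> \<bar>t\<bar> < \<epsilon> \<longrightarrow> (\<lambda>n. b n * t ^ n / c n) sums f t)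
    \<longleftrightarrow> b = (\<lambda>n. c n * fps_nth F n)"
proof -
  have "eventually (\<lambda>t. (\<lambda>n. fps_nth F n * t ^ n) sums f t) (at 0)"
    using eventually_norm_less_fps_conv_radius[OF radius] eval
    by eventually_elim (metis real_norm_def sums_eval_fps)
  then obtain \<delta> where \<delta>: "0 < \<delta>" "\<And>t. t \<noteq> 0 \<Longrightarrow> \<bar>t\<bar> < \<delta> \<Longrightarrow> (\<lambda>n. fps_nth F n * t ^ n) sums f t"
    unfolding eventually_at by auto
  show ?thesis
  proof
    assume "\<exists>\<epsilon>>0. \<forall>t. t \<noteq> 0 \<and> \<bar>t\<bar> < \<epsilon> \<longrightarrow> (\<lambda>n. b n * t ^ n / c n) sums f t"
    then obtain \<epsilon> where \<epsilon>: "0 < \<epsilon>" "\<And>t. t \<noteq> 0 \<Longrightarrow> \<bar>t\<bar> < \<epsilon> \<Longrightarrow> (\<lambda>n. b n * t ^ n / c n) sums f t"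
      by auto
    have "b n / c n - fps_nth F n = 0" for n
    proof (rule powser_coeff_eq_0_if_sums_0)
      show "0 < min \<epsilon> \<delta>"
        using \<epsilon> \<delta> by simp
      show "(\<lambda>n. (b n / c n - fps_nth F n) * t ^ n) sums 0" if "t \<noteq> 0" "norm t < min \<epsilon> \<delta>" for t
        using sums_diff[OF \<epsilon>(2) \<delta>(2), of t t] that by (simp add: algebra_simps)
    qed
    then show "b = (\<lambda>n. c n * fps_nth F n)"
      using c by (simp add: fun_eq_iff field_simps)
  next
    assume "b = (\<lambda>n. c n * fps_nth F n)"
    then show "\<exists>\<epsilon>>0. \<forall>t. t \<noteq> 0 \<and> \<bar>t\<bar> < \<epsilon> \<longrightarrow> (\<lambda>n. b n * t ^ n / c n) sums f t"
      using \<delta> c by auto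
  qed
qed

lemma qint_eq_sum: "q \<noteq> 1 \<Longrightarrow> qint q n = (\<Sum>i<n. q ^ i)"
  by (simp add: qint_def sum_gp_strict)

lemma qint_ge_1:
  assumes "0 \<le> q" "q \<noteq> 1" "1 \<le> n"
  shows "1 \<le> qint q n"
proof -
  have "(\<Sum>i\<in>{0}. q ^ i) \<le> (\<Sum>i<n. q ^ i)"
    by (rule sum_mono2) (use assms in auto)
  then show ?thesis
    using assms by (simp add: qint_eq_sum)
qed

lemma one_minus_mult_qint: "q \<noteq> 1 \<Longrightarrow> (1 - q) * qint q n = 1 - q ^ n"
  by (simp add: qint_def)

lemma qint_1: "q \<noteq> 1 \<Longrightarrow> qint q 1 = 1"
  by (simp add: qint_def)

lemma qint_2: "q \<noteq> 1 \<Longrightarrow> qint q 2 = 1 + q"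
  by (simp add: qint_eq_sum numeral_2_eq_2)

lemma qfact_0 [simp]: "qfact q 0 = 1"
  by (simp add: qfact_def)

lemma qfact_Suc: "qfact q (Suc n) = qint q (Suc n) * qfact q n"
  by (simp add: qfact_def prod.nat_ivl_Suc' mult.commute)

lemma qfact_ge_1: "0 \<le> q \<Longrightarrow> q \<noteq> 1 \<Longrightarrow> 1 \<le> qfact q n"
  unfolding qfact_def by (rule prod_ge_1) (auto intro: qint_ge_1)

lemma qfact_1: "q \<noteq> 1 \<Longrightarrow> qfact q 1 = 1"
  using qint_1 by (simp add: qfact_def)

lemma qfact_2: "q \<noteq> 1 \<Longrightarrow> qfact q 2 = 1 + q"
  using qfact_Suc[of q 1] qint_1[of q] qint_2[of q] by (simp add: qfact_Suc numeral_2_eq_2)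

lemma qbinom_mult_qfacts:
  assumes "0 \<le> q" "q \<noteq> 1"
  shows "qbinom q n k * qfact q k * qfact q (n - k) = qfact q n"
  using qfact_ge_1[OF assms, of k] qfact_ge_1[OF assms, of "n - k"] by (simp add: qbinom_def)

section \<open>The q-exponential series\<close>

definition qexp_fps :: "real \<Rightarrow> real fps" where
  "qexp_fps q = Abs_fps (\<lambda>n. 1 / qfact q n)"

lemma fps_X_mult_shift_qexp_fps: "fps_X * fps_shift 1 (qexp_fps q) = qexp_fps q - 1"
  by (rule fps_ext) (simp add: qexp_fps_def fps_X_mult_nth)

lemma qexp_fps_dilate_q:
  assumes "0 \<le> q" "q \<noteq> 1"
  shows "fps_dilate q (qexp_fps q) = qexp_fps q * (1 - fps_const (1 - q) * fps_X)"
proof -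
  have "fps_dilate q (qexp_fps q) = qexp_fps q - fps_const (1 - q) * (fps_X * qexp_fps q)"
  proof (rule fps_ext)
    fix n
    show "fps_nth (fps_dilate q (qexp_fps q)) n
        = fps_nth (qexp_fps q - fps_const (1 - q) * (fps_X * qexp_fps q)) n"
    proof (cases n)
      case (Suc m)
      have "qint q (Suc m) \<noteq> 0"
        using qint_ge_1[OF assms, of "Suc m"] by simp
      have "(1 - q ^ Suc m) / qfact q (Suc m) = (1 - q) * qint q (Suc m) / (qint q (Suc m) * qfact q m)"
        by (simp only: one_minus_mult_qint[OF assms(2)] qfact_Suc)
      also have "\<dots> = (1 - q) / qfact q m"
        using \<open>qint q (Suc m) \<noteq> 0\<close> by simp
      finally show ?thesis
        using Suc by (simp add: qexp_fps_def diff_divide_distrib)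
    qed (simp add: qexp_fps_def)
  qed
  then show ?thesis
    by (simp add: algebra_simps)
qed

lemma fps_conv_radius_qexp_fps:
  "0 \<le> q \<Longrightarrow> q \<noteq> 1 \<Longrightarrow> 1 \<le> fps_conv_radius (qexp_fps q)"
proof (intro fps_conv_radius_ge_1_if_bounded[of _ 1])
  fix n
  assume "0 \<le> q" "q \<noteq> 1"
  then have "1 \<le> \<bar>qfact q n\<bar>"
    using qfact_ge_1[of q n] by (metis abs_ge_self order_trans)
  then show "norm (fps_nth (qexp_fps q) n) \<le> 1"
    by (simp add: qexp_fps_def)
qed

lemma fps_conv_radius_dilate_qexp_fps_pos:
  "0 \<le> q \<Longrightarrow> q \<noteq> 1 \<Longrightarrow> 0 < fps_conv_radius (fps_dilate x (qexp_fps q))"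
  using fps_conv_radius_qexp_fps by (intro fps_conv_radius_dilate_pos) (simp add: less_le_trans[of 0 1])

lemma eval_qexp_fps: "eval_fps (qexp_fps q) t = eq q t"
  by (simp add: eval_fps_def eq_def qexp_fps_def)

section \<open>Generating series of the q-Bernoulli numbers and polynomials\<close>

text \<open>\<open>fps_shift 1 (qexp_fps q)\<close> is the series of \<open>(e\<^sub>q(t) - 1) / t\<close>, so \<open>qbern_fps q\<close> is
  that of \<open>t / (e\<^sub>q(t) - 1)\<close>.\<close>

definition qbern_fps :: "real \<Rightarrow> real fps" where
  "qbern_fps q = inverse (fps_shift 1 (qexp_fps q))"

lemma shift_qexp_fps_mult_qbern_fps: "q \<noteq> 1 \<Longrightarrow> fps_shift 1 (qexp_fps q) * qbern_fps q = 1"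
  unfolding qbern_fps_def using qfact_1[of q] by (intro inverse_mult_eq_1') (simp add: qexp_fps_def)

lemma qbern_fps_nth_0: "q \<noteq> 1 \<Longrightarrow> fps_nth (qbern_fps q) 0 = 1"
  using arg_cong[OF shift_qexp_fps_mult_qbern_fps, of q "\<lambda>F. fps_nth F 0"] qfact_1[of q]
  by (simp add: qexp_fps_def)

lemma qbern_fps_nth_1: "q \<noteq> 1 \<Longrightarrow> fps_nth (qbern_fps q) 1 = - 1 / (1 + q)"
  using arg_cong[OF shift_qexp_fps_mult_qbern_fps, of q "\<lambda>F. fps_nth F 1"] qfact_1[of q] qfact_2[of q]
  by (simp add: fps_mult_nth qexp_fps_def qbern_fps_nth_0 numeral_2_eq_2 eq_neg_iff_add_eq_0)

lemma qbern_fps_functional_eq: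
  assumes "0 \<le> q" "q \<noteq> 1"
  defines "H \<equiv> qbern_fps q"
  shows "fps_const (1 - q) * H * fps_dilate q H
    = fps_dilate q H - fps_const q * H - fps_const (1 - q) * fps_X * fps_dilate q H"
proof -
  \<comment> \<open>cross-multiplied by \<open>G\<close> and \<open>G(q t)\<close> this is the q-difference equation of \<open>E\<close>\<close>
  define E G where "E = qexp_fps q" and "G = fps_shift 1 E"
  have GH: "G * H = 1"
    using shift_qexp_fps_mult_qbern_fps[OF assms(2)] by (simp add: G_def E_def H_def)
  then have GH_q: "fps_dilate q G * fps_dilate q H = 1"
    by (metis fps_compose_1 fps_dilate_mult)
  have XG: "fps_X * G = E - 1"
    using fps_X_mult_shift_qexp_fps by (simp add: E_def G_def)
  have "fps_const q * fps_X * fps_dilate q G = fps_dilate q E - 1"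
    using arg_cong[OF XG, of "fps_dilate q"]
    by (simp only: fps_dilate_mult fps_dilate_fps_X fps_compose_sub_distrib fps_compose_1)
  then have XG_q: "fps_X * (fps_const q * fps_dilate q G) = fps_dilate q E - 1"
    by (simp only: mult_ac)
  have "fps_X * (G - fps_const q * fps_dilate q G) = E - fps_dilate q E"
    by (simp only: right_diff_distrib XG XG_q) simp
  also have "\<dots> = fps_X * (fps_const (1 - q) * (1 + fps_X * G))"
    using qexp_fps_dilate_q[OF assms(1,2)] XG by (simp add: E_def algebra_simps)
  finally have "G - fps_const q * fps_dilate q G = fps_const (1 - q) * (1 + fps_X * G)"
    by simp
  then show ?thesis
    using GH GH_q by algebra
qed

lemma fps_conv_radius_qbern_fps_pos: "0 \<le> q \<Longrightarrow> q \<noteq> 1 \<Longrightarrow> 0 < fps_conv_radius (qbern_fps q)"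
  unfolding qbern_fps_def using fps_conv_radius_qexp_fps[of q] qfact_1[of q]
  by (intro fps_conv_radius_inverse_pos) (auto simp: qexp_fps_def intro: less_le_trans[of 0 1])

lemma eventually_eval_qbern_fps:
  assumes "0 \<le> q" "q \<noteq> 1"
  shows "eventually (\<lambda>t. eval_fps (qbern_fps q) t = t / (eq q t - 1)) (at 0)"
proof -
  let ?G = "fps_shift 1 (qexp_fps q)"
  have "0 < fps_conv_radius (qexp_fps q)"
    using fps_conv_radius_qexp_fps[OF assms] by (simp add: less_le_trans[of 0 1])
  then have "eventually (\<lambda>t. t \<noteq> 0 \<and> ereal (norm t) < fps_conv_radius (qexp_fps q)
      \<and> ereal (norm t) < fps_conv_radius (qbern_fps q)) (at 0)"
    using eventually_neq_at_within eventually_norm_less_fps_conv_radius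
      fps_conv_radius_qbern_fps_pos[OF assms] by (intro eventually_conj) auto
  then show ?thesis
  proof eventually_elim
    case (elim t)
    define g where "g = eval_fps ?G t"
    have Hg: "eval_fps (qbern_fps q) t * g = 1"
      using arg_cong[OF shift_qexp_fps_mult_qbern_fps[OF assms(2)], of "\<lambda>F. eval_fps F t"] elim
      by (simp add: g_def eval_fps_mult mult.commute)
    have tg: "eq q t - 1 = t * g"
      using arg_cong[OF fps_X_mult_shift_qexp_fps[of q], of "\<lambda>F. eval_fps F t"] elim
      by (simp add: g_def eval_fps_mult eval_fps_diff eval_qexp_fps)
    have "g \<noteq> 0"
      using Hg by auto
    then show ?case
      using Hg elim by (simp add: tg eq_divide_eq mult.commute)
  qed
qed

definition qbern_poly_fps :: "real \<Rightarrow> real \<Rightarrow> real fps" where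
  "qbern_poly_fps q x = qbern_fps q * fps_dilate x (qexp_fps q)"

lemma qbern_poly_fps_mult_q:
  assumes "0 \<le> q" "q \<noteq> 1"
  shows "qbern_poly_fps q (q * x)
    = qbern_poly_fps q x - fps_const ((1 - q) * x) * (fps_X * qbern_poly_fps q x)"
proof -
  have "fps_dilate (q * x) (qexp_fps q) = fps_dilate x (fps_dilate q (qexp_fps q))"
    by (simp add: fps_dilate_dilate)
  also have "\<dots> = fps_dilate x (qexp_fps q) * (1 - fps_const ((1 - q) * x) * fps_X)"
    by (simp add: qexp_fps_dilate_q[OF assms] fps_dilate_mult fps_compose_sub_distrib
        fps_dilate_fps_X mult.assoc)
  finally show ?thesis
    by (simp add: qbern_poly_fps_def right_diff_distrib mult.left_commute)
qed

lemma qbern_poly_fps_functional_eq: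
  fixes q x :: real
  assumes "0 \<le> q" "q \<noteq> 1"
  defines "P \<equiv> fps_dilate q (qbern_poly_fps q x)"
  shows "fps_const (1 - q) * (P * qbern_fps q)
    = P - fps_const q * qbern_poly_fps q (q * x) - fps_const (1 - q) * (fps_X * P)"
proof -
  have "P = fps_dilate q (qbern_fps q) * fps_dilate (q * x) (qexp_fps q)"
    by (simp only: P_def qbern_poly_fps_def fps_dilate_mult fps_dilate_dilate mult.commute[of x q])
  then show ?thesis
    using arg_cong[OF qbern_fps_functional_eq[OF assms(1,2)], of "\<lambda>F. F * fps_dilate (q * x) (qexp_fps q)"]
    by (simp add: qbern_poly_fps_def algebra_simps)
qed

lemma qbern_poly_fps_nth_recurrence:
  fixes q x :: real
  assumes q: "0 \<le> q" "q \<noteq> 1"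
  defines "P \<equiv> qbern_poly_fps q x" and "H \<equiv> qbern_fps q"
  shows "q * qint q (Suc m) * fps_nth P (Suc m)
    = (q * x - q ^ Suc m / (1 + q)) * fps_nth P m
      - (\<Sum>k<m. q ^ k * fps_nth P k * fps_nth H (Suc m - k))"
proof -
  define T where "T = (\<Sum>k<m. q ^ k * fps_nth P k * fps_nth H (Suc m - k))"
  have "fps_nth (fps_dilate q P * H) (Suc m) = (\<Sum>k\<le>Suc m. q ^ k * fps_nth P k * fps_nth H (Suc m - k))"
    by (simp add: fps_mult_nth atLeast0AtMost)
  also have "\<dots> = T + q ^ m * fps_nth P m * fps_nth H 1 + q ^ Suc m * fps_nth P (Suc m) * fps_nth H 0"
    by (simp add: T_def Suc_diff_le lessThan_Suc_atMost [symmetric])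
  finally have coeff_lhs: "fps_nth (fps_dilate q P * H) (Suc m)
      = T - q ^ m * fps_nth P m / (1 + q) + q ^ Suc m * fps_nth P (Suc m)"
    using qbern_fps_nth_0[OF q(2)] qbern_fps_nth_1[OF q(2)] by (simp add: H_def)
  have "(1 - q) * fps_nth (fps_dilate q P * H) (Suc m)
      = q ^ Suc m * fps_nth P (Suc m) - q * (fps_nth P (Suc m) - (1 - q) * x * fps_nth P m)
        - (1 - q) * q ^ m * fps_nth P m"
    using arg_cong[OF qbern_poly_fps_functional_eq[OF q, of x], of "\<lambda>F. fps_nth F (Suc m)"]
    by (simp add: qbern_poly_fps_mult_q[OF q] P_def H_def)
  then have "(1 - q) * (T - q ^ m * fps_nth P m / (1 + q) + q ^ Suc m * fps_nth P (Suc m))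
      = q ^ Suc m * fps_nth P (Suc m) - q * (fps_nth P (Suc m) - (1 - q) * x * fps_nth P m)
        - (1 - q) * q ^ m * fps_nth P m"
    by (simp only: coeff_lhs)
  moreover have "(1 - q) * inverse (1 - q) = 1" "(1 + q) * inverse (1 + q) = 1"
    using q by auto
  \<comment> \<open>\<open>algebra\<close> needs \<open>q ^ m\<close> as an atom\<close>
  moreover define Y where "Y = q ^ m"
  ultimately show ?thesis
    using one_minus_mult_qint[OF q(2), of "Suc m"]
    unfolding T_def[symmetric] divide_inverse power_Suc Y_def[symmetric]
    by algebra
qed

lemma fps_conv_radius_qbern_poly_fps_pos:
  assumes "0 \<le> q" "q \<noteq> 1"
  shows "0 < fps_conv_radius (qbern_poly_fps q x)"
  using fps_conv_radius_dilate_qexp_fps_pos[OF assms] fps_conv_radius_qbern_fps_pos[OF assms]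
    fps_conv_radius_mult
  unfolding qbern_poly_fps_def by (metis min_less_iff_conj order_less_le_trans)

lemma eventually_eval_qbern_poly_fps:
  assumes "0 \<le> q" "q \<noteq> 1"
  shows "eventually (\<lambda>t. eval_fps (qbern_poly_fps q x) t = t / (eq q t - 1) * eq q (t * x)) (at 0)"
proof -
  have "eventually (\<lambda>t. ereal (norm t) < fps_conv_radius (qbern_fps q)
      \<and> ereal (norm t) < fps_conv_radius (fps_dilate x (qexp_fps q))) (at 0)"
    using eventually_norm_less_fps_conv_radius fps_conv_radius_qbern_fps_pos[OF assms]
      fps_conv_radius_dilate_qexp_fps_pos[OF assms] by (intro eventually_conj) auto
  with eventually_eval_qbern_fps[OF assms] show ?thesis
    by eventually_elim
      (simp add: qbern_poly_fps_def eval_fps_mult eval_fps_dilate eval_qexp_fps, simp add: mult.commute)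
qed

lemma qbern_num_eq:
  assumes "0 \<le> q" "q \<noteq> 1"
  shows "qbern_num q n = qfact q n * fps_nth (qbern_fps q) n"
proof -
  have "qfact q k \<noteq> 0" for k
    using qfact_ge_1[OF assms, of k] by simp
  note expansion = punctured_expansion_iff[OF this fps_conv_radius_qbern_fps_pos[OF assms]
      eventually_eval_qbern_fps[OF assms]]
  show ?thesis
    unfolding qbern_num_def expansion by simp
qed

lemma qbern_poly_eq:
  assumes "0 \<le> q" "q \<noteq> 1"
  shows "qbern_poly q n x = qfact q n * fps_nth (qbern_poly_fps q x) n"
proof -
  have "qfact q k \<noteq> 0" for k
    using qfact_ge_1[OF assms, of k] by simp
  note expansion = punctured_expansion_iff[OF this fps_conv_radius_qbern_poly_fps_pos[OF assms]
      eventually_eval_qbern_poly_fps[OF assms]]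
  have "qbern_poly q = (\<lambda>n x. qfact q n * fps_nth (qbern_poly_fps q x) n)"
    unfolding qbern_poly_def expansion by (rule the_equality) (auto simp: fun_eq_iff)
  then show ?thesis
    by simp
qed

lemma qbern_poly_mult_q:
  assumes "0 \<le> q" "q \<noteq> 1"
  shows "qbern_poly q (Suc m) (q * x)
    = qbern_poly q (Suc m) x - (1 - q ^ Suc m) * x * qbern_poly q m x"
proof -
  let ?P = "qbern_poly_fps q x"
  have "qbern_poly q (Suc m) (q * x)
      = qfact q (Suc m) * fps_nth ?P (Suc m) - (1 - q) * qint q (Suc m) * x * (qfact q m * fps_nth ?P m)"
    by (simp add: qbern_poly_eq[OF assms] qbern_poly_fps_mult_q[OF assms] qfact_Suc algebra_simps)
  then show ?thesis
    by (simp add: qbern_poly_eq[OF assms] one_minus_mult_qint[OF assms(2)])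
qed

lemma qbern_poly_recurrence:
  assumes "0 < q" "q \<noteq> 1"
  shows "qbern_poly q (Suc m) x = (x - q ^ m / (1 + q)) * qbern_poly q m x
    - (\<Sum>k<m. qbinom q (Suc m) k * q ^ k * qbern_num q (Suc m - k) * qbern_poly q k x)
      / (q * qint q (Suc m))"
proof -
  have q: "0 \<le> q" "q \<noteq> 1"
    using assms by auto
  define P H where "P = qbern_poly_fps q x" and "H = qbern_fps q"
  define T where "T = (\<Sum>k<m. q ^ k * fps_nth P k * fps_nth H (Suc m - k))"
  have "(\<Sum>k<m. qbinom q (Suc m) k * q ^ k * qbern_num q (Suc m - k) * qbern_poly q k x)
      = (\<Sum>k<m. qfact q (Suc m) * (q ^ k * fps_nth P k * fps_nth H (Suc m - k)))"
  proof (rule sum.cong)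
    fix k
    have "qbinom q (Suc m) k * qfact q k * qfact q (Suc m - k) = qfact q (Suc m)"
      by (rule qbinom_mult_qfacts[OF q])
    then show "qbinom q (Suc m) k * q ^ k * qbern_num q (Suc m - k) * qbern_poly q k x
        = qfact q (Suc m) * (q ^ k * fps_nth P k * fps_nth H (Suc m - k))"
      by (simp add: qbern_num_eq[OF q] qbern_poly_eq[OF q] P_def H_def algebra_simps)
  qed simp
  also have "\<dots> = qfact q (Suc m) * T"
    by (simp add: T_def sum_distrib_left)
  finally have sum: "(\<Sum>k<m. qbinom q (Suc m) k * q ^ k * qbern_num q (Suc m - k) * qbern_poly q k x)
      = qfact q (Suc m) * T" .
  have rec: "q * qint q (Suc m) * fps_nth P (Suc m) = (q * x - q ^ Suc m / (1 + q)) * fps_nth P m - T"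
    using qbern_poly_fps_nth_recurrence[OF q, where x = x and m = m] unfolding P_def H_def T_def .
  have "qint q (Suc m) \<noteq> 0"
    using qint_ge_1[OF q, of "Suc m"] by simp
  have "qbern_poly q (Suc m) x = qfact q m * (q * qint q (Suc m) * fps_nth P (Suc m)) / q"
    using assms(1) by (simp add: qbern_poly_eq[OF q] qfact_Suc P_def)
  also have "\<dots> = qfact q m * ((q * x - q ^ Suc m / (1 + q)) * fps_nth P m - T) / q"
    by (simp only: rec)
  also have "\<dots> = (x - q ^ m / (1 + q)) * (qfact q m * fps_nth P m)
      - qfact q (Suc m) * T / (q * qint q (Suc m))"
    using assms(1) \<open>qint q (Suc m) \<noteq> 0\<close> by (simp add: qfact_Suc field_simps)
  finally show ?thesis
    unfolding sum by (simp add: qbern_poly_eq[OF q] P_def)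
qed

theorem theorem3:
  fixes q x :: real and n :: nat
  assumes "0 < q" "q < 1" "n \<ge> 1"
  shows "qbern_poly q n (q * x) =
    q ^ n * (x - 1 / (q * qint q 2)) * qbern_poly q (n - 1) x
    - 1 / qint q n * (\<Sum>k<n - 1. qbinom q n k * q powi (int k - 1)
        * qbern_num q (n - k) * qbern_poly q k x)"
proof -
  obtain m where n: "n = Suc m"
    using assms(3) by (cases n) auto
  have q: "0 \<le> q" "q \<noteq> 1" "q \<noteq> 0"
    using assms by auto
  define S where "S = (\<Sum>k<m. qbinom q (Suc m) k * q ^ k * qbern_num q (Suc m - k) * qbern_poly q k x)"
  have sum: "(\<Sum>k<m. qbinom q (Suc m) k * q powi (int k - 1) * qbern_num q (Suc m - k) * qbern_poly q k x)
      = S / q"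
    by (simp add: S_def sum_divide_distrib power_int_diff q(3))
  have rec: "qbern_poly q (Suc m) (q * x)
      = (x - q ^ m / (1 + q) - (1 - q ^ Suc m) * x) * qbern_poly q m x - S / (q * qint q (Suc m))"
    using qbern_poly_mult_q[OF q(1,2), of m x] qbern_poly_recurrence[OF assms(1) q(2), of m x]
    unfolding S_def[symmetric] by (simp add: algebra_simps)
  have "1 + q \<noteq> 0"
    using q by auto
  then have "q ^ Suc m * (1 / (q * (1 + q))) = q ^ m / (1 + q)"
    using q by simp
  then have "x - q ^ m / (1 + q) - (1 - q ^ Suc m) * x = q ^ Suc m * (x - 1 / (q * (1 + q)))"
    by (simp add: algebra_simps)
  then show ?thesis
    unfolding n diff_Suc_1 sum rec by (simp add: qint_2 q)
qed

end
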